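(* In the algebra $\mathcal O_q$ defined in the context, with $B_\delta=q^{-2}\mathcal W_1\mathcal W_0-\mathcal W_0\mathcal W_1$, the following hold for all $k\in\mathbb N$: (i) $[\tilde{\mathcal G}_{k+1},\mathcal W_0]_q=(q-q^{-1})\mathcal W_0\tilde{\mathcal G}_{k+1}-q^2[B_\delta,\mathcal W_{-k}]$; (ii) $[\mathcal W_1,\tilde{\mathcal G}_{k+1}]_q=(q-q^{-1})\mathcal W_1\tilde{\mathcal G}_{k+1}+[B_\delta,\mathcal W_{k+1}]$.
   Context: All algebras are associative and unital over a field $\mathbb F$; $q\in\mathbb F$ is nonzero and not a root of unity. For elements $X,Y$ of an algebra, $[X,Y]=XY-YX$ and $[X,Y]_q=qXY-q^{-1}YX$. Let $\rho=-(q^2-q^{-2})^2$. The algebra $\mathcal O_q$ is defined by generators $\mathcal W_{-k},\mathcal W_{k+1},\mathcal G_{k+1},\tilde{\mathcal G}_{k+1}$ ($k\in\mathbb N$) and the following relations for all $k,\ell\in\mathbb N$: $[\mathcal W_0,\mathcal W_{k+1}]=[\mathcal W_{-k},\mathcal W_1]=(\tilde{\mathcal G}_{k+1}-\mathcal G_{k+1})/(q+q^{-1})$; $[\mathcal W_0,\mathcal G_{k+1}]_q=[\tilde{\mathcal G}_{k+1},\mathcal W_0]_q=\rho\mathcal W_{-k-1}-\rho\mathcal W_{k+1}$; $[\mathcal G_{k+1},\mathcal W_1]_q=[\mathcal W_1,\tilde{\mathcal G}_{k+1}]_q=\rho\mathcal W_{k+2}-\rho\mathcal W_{-k}$; $[\mathcal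 W_{-k},\mathcal W_{-\ell}]=0$, $[\mathcal W_{k+1},\mathcal W_{\ell+1}]=0$; $[\mathcal W_{-k},\mathcal W_{\ell+1}]+[\mathcal W_{k+1},\mathcal W_{-\ell}]=0$; $[\mathcal W_{-k},\mathcal G_{\ell+1}]+[\mathcal G_{k+1},\mathcal W_{-\ell}]=0$; $[\mathcal W_{-k},\tilde{\mathcal G}_{\ell+1}]+[\tilde{\mathcal G}_{k+1},\mathcal W_{-\ell}]=0$; $[\mathcal W_{k+1},\mathcal G_{\ell+1}]+[\mathcal G_{k+1},\mathcal W_{\ell+1}]=0$; $[\mathcal W_{k+1},\tilde{\mathcal G}_{\ell+1}]+[\tilde{\mathcal G}_{k+1},\mathcal W_{\ell+1}]=0$; $[\mathcal G_{k+1},\mathcal G_{\ell+1}]=0$, $[\tilde{\mathcal G}_{k+1},\tilde{\mathcal G}_{\ell+1}]=0$; $[\tilde{\mathcal G}_{k+1},\mathcal G_{\ell+1}]+[\mathcal G_{k+1},\tilde{\mathcal G}_{\ell+1}]=0$. *)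

theory Defs
  imports Main
begin

text \<open>A unital associative algebra over a field 'f is modelled as a ring 'a together with
 a unital ring homomorphism emb from 'f into the centre of 'a (scalar c acts as emb c * _).\<close>

definition is_algebra_emb :: "('f::field \<Rightarrow> 'a::ring_1) \<Rightarrow> bool" where
  "is_algebra_emb emb \<longleftrightarrow>
     emb 1 = 1 \<and> (\<forall>x y. emb (x + y) = emb x + emb y) \<and> (\<forall>x y. emb (x * y) = emb x * emb y)
     \<and> (\<forall>c X. emb c * X = X * emb c)"

definition comm :: "'a::ring \<Rightarrow> 'a \<Rightarrow> 'a" where
  "comm X Y = X * Y - Y * X"

definition qcomm :: "('f::field \<Rightarrow> 'a::ring_1) \<Rightarrow> 'f \<Rightarrow> 'a \<Rightarrow> 'a \<Rightarrow> 'a" where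
  "qcomm emb q X Y = emb q * X * Y - emb (inverse q) * Y * X"

definition rho :: "'f::field \<Rightarrow> 'f" where
  "rho q = - ((q^2 - inverse q ^ 2)^2)"

text \<open>Indexing: Wm k = W_{-k}, Wp k = W_{k+1}, G k = G_{k+1}, Gt k = tilde G_{k+1}.
 Oq_rels says these elements satisfy all defining relations of O_q.\<close>

definition Oq_rels :: "('f::field \<Rightarrow> 'a::ring_1) \<Rightarrow> 'f \<Rightarrow> (nat \<Rightarrow> 'a) \<Rightarrow> (nat \<Rightarrow> 'a)
    \<Rightarrow> (nat \<Rightarrow> 'a) \<Rightarrow> (nat \<Rightarrow> 'a) \<Rightarrow> bool" where
  "Oq_rels emb q Wm Wp G Gt \<longleftrightarrow>
    (\<forall>k l.
      comm (Wm 0) (Wp k) = emb (inverse (q + inverse q)) * (Gt k - G k) \<and>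
      comm (Wm k) (Wp 0) = emb (inverse (q + inverse q)) * (Gt k - G k) \<and>
      qcomm emb q (Wm 0) (G k) = emb (rho q) * Wm (Suc k) - emb (rho q) * Wp k \<and>
      qcomm emb q (Gt k) (Wm 0) = emb (rho q) * Wm (Suc k) - emb (rho q) * Wp k \<and>
      qcomm emb q (G k) (Wp 0) = emb (rho q) * Wp (Suc k) - emb (rho q) * Wm k \<and>
      qcomm emb q (Wp 0) (Gt k) = emb (rho q) * Wp (Suc k) - emb (rho q) * Wm k \<and>
      comm (Wm k) (Wm l) = 0 \<and> comm (Wp k) (Wp l) = 0 \<and>
      comm (Wm k) (Wp l) + comm (Wp k) (Wm l) = 0 \<and>
      comm (Wm k) (G l) + comm (G k) (Wm l) = 0 \<and>
      comm (Wm k) (Gt l) + comm (Gt k) (Wm l) = 0 \<and>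
      comm (Wp k) (G l) + comm (G k) (Wp l) = 0 \<and>
      comm (Wp k) (Gt l) + comm (Gt k) (Wp l) = 0 \<and>
      comm (G k) (G l) = 0 \<and> comm (Gt k) (Gt l) = 0 \<and>
      comm (Gt k) (G l) + comm (G k) (Gt l) = 0)"

end

theory Submission
  imports Defs
begin

(* Put s = q + q^-1 and X = [W_-k, W_1], so that G_k+1 = G~_k+1 - s X. Since
   [A, B]_q - [B, A]_q = s [A, B], substituting into [W_0, G_k+1]_q = [G~_k+1, W_0]_q gives
   s [W_0, G~_k+1] = s [W_0, X]_q, and s is invertible because q^4 <> 1. As
   B_delta = -q^-1 [W_0, W_1]_q and W_-k commutes with W_0, also [B_delta, W_-k] = q^-1 [W_0, X]_q,
   and claim (i) follows from the splitting [A, B]_q = (q - q^-1) B A + q [A, B].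
   Claim (ii) is the mirror argument, with [W_1, W_k+1] = 0 and [W_0, W_k+1] = (G~_k+1 - G_k+1) / s. *)

lemma comm_antisym: "comm Y X = - comm X (Y::'a::ring)"
  by (simp add: comm_def)

lemma comm_uminus_left: "comm (- X) Y = - comm X (Y::'a::ring)"
  by (simp add: comm_def)

lemma comm_diff_left: "comm (X - Y) Z = comm X Z - comm Y (Z::'a::ring)"
  by (simp add: comm_def algebra_simps)

lemma comm_mult_left: "comm (X * Y) Z = X * comm Y Z + comm X Z * (Y::'a::ring)"
  by (simp add: comm_def algebra_simps)

lemma add_inverse_neq_zero:
  fixes q :: "'f::field"
  assumes "q \<noteq> 0" and "q ^ 4 \<noteq> 1"
  shows "q + inverse q \<noteq> 0"
proof
  assume "q + inverse q = 0"
  then have "q * (q + inverse q) = 0"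
    by simp
  then have "q * q + 1 = 0"
    using \<open>q \<noteq> 0\<close> by (simp add: distrib_left)
  then have "q\<^sup>2 = -1"
    by (simp add: power2_eq_square eq_neg_iff_add_eq_0)
  then have "q ^ 4 = 1"
    using power_mult[of q 2 2] by simp
  with assms(2) show False ..
qed

locale algebra_embedding =
  fixes emb :: "'f::field \<Rightarrow> 'a::ring_1"
  assumes is_algebra_emb: "is_algebra_emb emb"
begin

abbreviation scale :: "'f \<Rightarrow> 'a \<Rightarrow> 'a"  (infixr "\<cdot>" 75)
  where "c \<cdot> X \<equiv> emb c * X"

lemma emb_one: "emb 1 = 1"
  and emb_add: "emb (a + b) = emb a + emb b"
  and emb_mult: "emb (a * b) = emb a * emb b"
  and emb_commute: "emb c * X = X * emb c"
  using is_algebra_emb unfolding is_algebra_emb_def by blast+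

lemma emb_zero: "emb 0 = 0"
  using emb_add[of 0 0] by simp

lemma emb_uminus: "emb (- a) = - emb a"
  using emb_add[of a "- a"] by (simp add: emb_zero add_eq_0_iff)

lemma scale_one: "1 \<cdot> X = X"
  by (simp add: emb_one)

lemma scale_scale: "a \<cdot> b \<cdot> X = (a * b) \<cdot> X"
  by (simp add: emb_mult mult.assoc)

lemma mult_scale_right: "X * (c \<cdot> Y) = c \<cdot> (X * Y)"
  by (metis emb_commute mult.assoc)

lemma scale_add_left: "(a + b) \<cdot> X = a \<cdot> X + b \<cdot> X"
  by (simp add: emb_add distrib_right)

lemma scale_uminus_left: "(- a) \<cdot> X = - (a \<cdot> X)"
  by (simp add: emb_uminus)

lemma scale_diff_left: "(a - b) \<cdot> X = a \<cdot> X - b \<cdot> X"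
  using scale_add_left[of a "- b"] by (simp add: scale_uminus_left)

lemma scale_cancel:
  assumes "c \<noteq> 0" and "c \<cdot> X = c \<cdot> Y"
  shows "X = Y"
  using arg_cong[OF assms(2), of "\<lambda>Z. inverse c \<cdot> Z"] assms(1)
  by (simp add: scale_scale scale_one)

lemma eq_inverse_scale_iff:
  assumes "c \<noteq> 0"
  shows "X = inverse c \<cdot> Y \<longleftrightarrow> c \<cdot> X = Y"
  using assms scale_cancel[of "inverse c"] by (auto simp: scale_scale scale_one)

lemma comm_emb_left: "comm (emb c) X = 0"
  by (simp add: comm_def emb_commute)

lemma comm_scale_left: "comm (c \<cdot> X) Y = c \<cdot> comm X Y"
  by (simp add: comm_def mult_scale_right mult.assoc right_diff_distrib)

lemma qcomm_diff_left: "qcomm emb q (X - Y) Z = qcomm emb q X Z - qcomm emb q Y Z"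
  and qcomm_diff_right: "qcomm emb q X (Y - Z) = qcomm emb q X Y - qcomm emb q X Z"
  by (simp_all add: qcomm_def algebra_simps)

lemma qcomm_uminus_right: "qcomm emb q X (- Y) = - qcomm emb q X Y"
  by (simp add: qcomm_def algebra_simps)

lemma qcomm_scale_left: "qcomm emb q (c \<cdot> X) Y = c \<cdot> qcomm emb q X Y"
  and qcomm_scale_right: "qcomm emb q X (c \<cdot> Y) = c \<cdot> qcomm emb q X Y"
  \<comment> \<open>\<open>mult_scale_right\<close> is instantiated because it loops on a product of two scalars\<close>
  by (simp_all add: qcomm_def right_diff_distrib mult.assoc scale_scale mult.commute
      mult_scale_right[of X] mult_scale_right[of Y])

lemma qcomm_minus_qcomm_swap:
  "qcomm emb q X Y - qcomm emb q Y X = (q + inverse q) \<cdot> comm X Y"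
  by (simp add: qcomm_def comm_def scale_add_left mult.assoc algebra_simps)

lemma qcomm_eq_comm_left: "qcomm emb q X Y = (q - inverse q) \<cdot> Y * X + q \<cdot> comm X Y"
  and qcomm_eq_comm_right: "qcomm emb q X Y = (q - inverse q) \<cdot> X * Y + inverse q \<cdot> comm X Y"
  by (simp_all add: qcomm_def comm_def scale_diff_left mult.assoc algebra_simps)

lemma inverse_scale_qcomm:
  assumes "q \<noteq> 0"
  shows "inverse q \<cdot> qcomm emb q X Y = X * Y - inverse q ^ 2 \<cdot> Y * X"
  using assms
  by (simp add: qcomm_def right_diff_distrib scale_scale scale_one mult.assoc power2_eq_square)

lemma comm_qcomm_left:
  assumes "comm X Z = 0"
  shows "comm (qcomm emb q X Y) Z = qcomm emb q X (comm Y Z)"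
  using assms
  by (simp add: qcomm_def comm_diff_left mult.assoc comm_mult_left comm_emb_left)

lemma comm_qcomm_right:
  assumes "comm Y Z = 0"
  shows "comm (qcomm emb q X Y) Z = qcomm emb q (comm X Z) Y"
  using assms
  by (simp add: qcomm_def comm_diff_left mult.assoc comm_mult_left comm_emb_left)

lemma comm_eq_qcomm_of_qcomm_swap_left:
  assumes s: "q + inverse q \<noteq> 0"
    and rel: "qcomm emb q X G = qcomm emb q Gt X"
    and diff: "Gt - G = (q + inverse q) \<cdot> Y"
  shows "comm X Gt = qcomm emb q X Y"
proof (rule scale_cancel[OF s])
  have "(q + inverse q) \<cdot> comm X Gt = qcomm emb q X Gt - qcomm emb q Gt X"
    by (simp add: qcomm_minus_qcomm_swap)
  also have "\<dots> = qcomm emb q X (Gt - G)"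
    by (simp add: rel qcomm_diff_right)
  also have "\<dots> = (q + inverse q) \<cdot> qcomm emb q X Y"
    by (simp add: diff qcomm_scale_right)
  finally show "(q + inverse q) \<cdot> comm X Gt = (q + inverse q) \<cdot> qcomm emb q X Y" .
qed

lemma comm_eq_qcomm_of_qcomm_swap_right:
  assumes s: "q + inverse q \<noteq> 0"
    and rel: "qcomm emb q G X = qcomm emb q X Gt"
    and diff: "Gt - G = (q + inverse q) \<cdot> Y"
  shows "comm Gt X = qcomm emb q Y X"
proof (rule scale_cancel[OF s])
  have "(q + inverse q) \<cdot> comm Gt X = qcomm emb q Gt X - qcomm emb q X Gt"
    by (simp add: qcomm_minus_qcomm_swap)
  also have "\<dots> = qcomm emb q (Gt - G) X"
    by (simp add: rel qcomm_diff_left)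
  also have "\<dots> = (q + inverse q) \<cdot> qcomm emb q Y X"
    by (simp add: diff qcomm_scale_left)
  finally show "(q + inverse q) \<cdot> comm Gt X = (q + inverse q) \<cdot> qcomm emb q Y X" .
qed

lemma qcomm_left_eq_comm_Bdelta:
  assumes q: "q \<noteq> 0" and s: "q + inverse q \<noteq> 0"
    and WZ: "comm W Z = 0"
    and diff: "Gt - G = (q + inverse q) \<cdot> comm Z V"
    and rel: "qcomm emb q W G = qcomm emb q Gt W"
  shows "qcomm emb q Gt W
    = (q - inverse q) \<cdot> W * Gt - q\<^sup>2 \<cdot> comm (inverse q ^ 2 \<cdot> V * W - W * V) Z"
proof -
  have Bdelta: "inverse q ^ 2 \<cdot> V * W - W * V = - (inverse q \<cdot> qcomm emb q W V)"
    by (simp add: inverse_scale_qcomm[OF q])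
  have "q\<^sup>2 \<cdot> comm (inverse q ^ 2 \<cdot> V * W - W * V) Z
      = - ((q\<^sup>2 * inverse q) \<cdot> qcomm emb q W (comm V Z))"
    by (simp add: Bdelta comm_uminus_left comm_scale_left comm_qcomm_left[OF WZ] scale_scale)
  also have "\<dots> = q \<cdot> qcomm emb q W (comm Z V)"
    using q by (simp add: comm_antisym[of V Z] qcomm_uminus_right power2_eq_square mult.assoc)
  also have "\<dots> = q \<cdot> comm W Gt"
    by (simp add: comm_eq_qcomm_of_qcomm_swap_left[OF s rel diff])
  finally show ?thesis
    by (simp add: qcomm_eq_comm_left[of q Gt W] comm_antisym[of Gt W])
qed

lemma qcomm_right_eq_comm_Bdelta:
  assumes q: "q \<noteq> 0" and s: "q + inverse q \<noteq> 0"
    and VZ: "comm V Z = 0"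
    and diff: "Gt - G = (q + inverse q) \<cdot> comm W Z"
    and rel: "qcomm emb q G V = qcomm emb q V Gt"
  shows "qcomm emb q V Gt
    = (q - inverse q) \<cdot> V * Gt + comm (inverse q ^ 2 \<cdot> V * W - W * V) Z"
proof -
  have Bdelta: "inverse q ^ 2 \<cdot> V * W - W * V = - (inverse q \<cdot> qcomm emb q W V)"
    by (simp add: inverse_scale_qcomm[OF q])
  have "comm (inverse q ^ 2 \<cdot> V * W - W * V) Z = - (inverse q \<cdot> qcomm emb q (comm W Z) V)"
    by (simp add: Bdelta comm_uminus_left comm_scale_left comm_qcomm_right[OF VZ])
  also have "\<dots> = inverse q \<cdot> comm V Gt"
    by (simp add: comm_eq_qcomm_of_qcomm_swap_right[OF s rel diff, symmetric] comm_antisym[of V Gt])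
  finally show ?thesis
    by (simp add: qcomm_eq_comm_right[of q V Gt])
qed

end

theorem lemma11p4:
  fixes emb :: "'f::field \<Rightarrow> 'a::ring_1" and q :: 'f
    and Wm Wp G Gt :: "nat \<Rightarrow> 'a" and k :: nat
  assumes "is_algebra_emb emb"
    and "q \<noteq> 0" and "\<forall>n::nat. n > 0 \<longrightarrow> q ^ n \<noteq> 1"
    and "Oq_rels emb q Wm Wp G Gt"
  defines "Bd \<equiv> emb (inverse q ^ 2) * Wp 0 * Wm 0 - Wm 0 * Wp 0"
  shows "qcomm emb q (Gt k) (Wm 0)
           = emb (q - inverse q) * Wm 0 * Gt k - emb (q ^ 2) * comm Bd (Wm k)
         \<and> qcomm emb q (Wp 0) (Gt k)
           = emb (q - inverse q) * Wp 0 * Gt k + comm Bd (Wp k)"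
proof -
  interpret algebra_embedding emb
    by (fact algebra_embedding.intro[OF assms(1)])
  have s: "q + inverse q \<noteq> 0"
    using assms(2,3) by (intro add_inverse_neq_zero) auto
  note rels = assms(4)[unfolded Oq_rels_def, rule_format]
  have diff_left: "Gt k - G k = (q + inverse q) \<cdot> comm (Wm k) (Wp 0)"
    and diff_right: "Gt k - G k = (q + inverse q) \<cdot> comm (Wm 0) (Wp k)"
    using rels[of k 0] rels[of 0 k] eq_inverse_scale_iff[OF s] by metis+
  have W0_Wk: "comm (Wm 0) (Wm k) = 0" and W1_Wk1: "comm (Wp 0) (Wp k) = 0"
    and rel_left: "qcomm emb q (Wm 0) (G k) = qcomm emb q (Gt k) (Wm 0)"
    and rel_right: "qcomm emb q (G k) (Wp 0) = qcomm emb q (Wp 0) (Gt k)"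
    using rels[of 0 k] rels[of k 0] by simp_all
  show ?thesis
    unfolding Bd_def
    using qcomm_left_eq_comm_Bdelta[OF assms(2) s W0_Wk diff_left rel_left]
      qcomm_right_eq_comm_Bdelta[OF assms(2) s W1_Wk1 diff_right rel_right]
    by simp
qed

end
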